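(* Let $(X,d)$ be a pointed metric space and let $((x_i,y_i))_{i\in I}$ be a Lipschitz interpolating family in $\widetilde X$ for $\mathrm{Lip}_0(X)$ with Lipschitz interpolation constant $M$. Then for all $i,j\in I$ with $i\neq j$, $$\|m_{x_i,y_i}-m_{x_j,y_j}\|\geq \frac{1}{M},$$ the norm being that of $\mathcal F(X)$ (equivalently of $\mathrm{Lip}_0(X)^*$).
   Context: All spaces are real. $(X,d)$ is a metric space with base point $0$, $\widetilde{X}=\{(x,y)\in X\times X: x\neq y\}$. $\mathrm{Lip}_0(X)$ is the Banach space of Lipschitz $f:X\to\mathbb{R}$ with $f(0)=0$, normed by $\|f\|=\sup_{(x,y)\in\widetilde X}|f(x)-f(y)|/d(x,y)$. For $x\in X$, $\delta_x\in\mathrm{Lip}_0(X)^*$ is $\delta_x(f)=f(x)$; $\mathcal F(X)$ is the closed linear span of $\{\delta_x\}$ in $\mathrm{Lip}_0(X)^*$; for $(x,y)\in\widetilde X$, $m_{x,y}=(\delta_x-\delta_y)/d(x,y)$. For a family $((x_i,y_i))_{i\in I}$ in $\widetilde X$, $T:\mathrm{Lip}_0(X)\to\ell_\infty(I)$, $T(f)=\big((f(x_i)-f(y_i))/d(x_i,y_i)\big)_{i\in I}$; the family is Lipschitz interpolating for $\mathrm{Lip}_0(X)$ if $T$ is surjective, and then its Lipschitz interpolation constant is $M=\inf\{K\geq 1: \forall \alpha\in\ell_\infty(I), \|\alpha\|_\infty\le1,\ \exists f\in\mathrm{Lip}_0(X),\ \|f\|\le K,\ T(f)=\alpha\}$.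 *)

theory Defs
  imports "HOL-Analysis.Analysis"
begin

definition Lip0 :: "'a::metric_space \<Rightarrow> ('a \<Rightarrow> real) set" where
  "Lip0 z = {f. f z = 0 \<and> (\<exists>C. C-lipschitz_on UNIV f)}"

definition lip_norm :: "('a::metric_space \<Rightarrow> real) \<Rightarrow> real" where
  "lip_norm f = Sup {\<bar>f x - f y\<bar> / dist x y | x y. x \<noteq> y}"

definition dual_norm :: "'a::metric_space \<Rightarrow> (('a \<Rightarrow> real) \<Rightarrow> real) \<Rightarrow> real" where
  "dual_norm z \<phi> = Sup {\<bar>\<phi> f\<bar> | f. f \<in> Lip0 z \<and> lip_norm f \<le> 1}"

text \<open>Molecule m_{x,y} = (delta_x - delta_y)/d(x,y) as a functional.\<close>
definition molecule :: "'a::metric_space \<Rightarrow> 'a \<Rightarrow> ('a \<Rightarrow> real) \<Rightarrow> real" where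
  "molecule x y = (\<lambda>f. (f x - f y) / dist x y)"

definition lip_interpolating :: "'a::metric_space \<Rightarrow> 'i set \<Rightarrow> ('i \<Rightarrow> 'a) \<Rightarrow> ('i \<Rightarrow> 'a) \<Rightarrow> bool" where
  "lip_interpolating z I xs ys \<longleftrightarrow>
     (\<forall>i\<in>I. xs i \<noteq> ys i) \<and>
     (\<forall>\<alpha>::'i \<Rightarrow> real. bounded (\<alpha> ` I) \<longrightarrow>
        (\<exists>f\<in>Lip0 z. \<forall>i\<in>I. molecule (xs i) (ys i) f = \<alpha> i))"

definition lip_interp_const :: "'a::metric_space \<Rightarrow> 'i set \<Rightarrow> ('i \<Rightarrow> 'a) \<Rightarrow> ('i \<Rightarrow> 'a) \<Rightarrow> real" where
  "lip_interp_const z I xs ys = Inf {K. K \<ge> 1 \<and>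
     (\<forall>\<alpha>::'i \<Rightarrow> real. (\<forall>i\<in>I. \<bar>\<alpha> i\<bar> \<le> 1) \<longrightarrow>
        (\<exists>f\<in>Lip0 z. lip_norm f \<le> K \<and> (\<forall>i\<in>I. molecule (xs i) (ys i) f = \<alpha> i)))}"

end

theory Submission
  imports Defs
begin

(*
  If f interpolates the sequence that is 1 at i, -1 at j and 0 elsewhere with lip_norm f <= K,
  then f / K lies in the unit ball of Lip0(X) and m_i - m_j takes the value 2 / K on it; hence
  the dual norm is at least 2 / K for every admissible K.  The substance is that admissible K
  exist at all, i.e. the open mapping theorem for the surjection T: by Baire's theorem in
  l_infinity(I) some ball lies in the closure of the image of an n-ball of Lip0(X), symmetry
  and homogeneity move it to the unit ball, and successive approximation with geometrically
  shrinking Lipschitz constants turns approximate interpolation into exact interpolation.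
*)

lemma lipschitz_quotient_le:
  fixes f :: "'a::metric_space \<Rightarrow> real"
  assumes "C-lipschitz_on UNIV f" and "x \<noteq> y"
  shows "\<bar>f x - f y\<bar> / dist x y \<le> C"
proof -
  have "\<bar>f x - f y\<bar> \<le> C * dist x y"
    using lipschitz_onD[OF assms(1)] by (simp add: dist_real_def)
  then show ?thesis
    using assms(2) by (simp add: pos_divide_le_eq)
qed

lemma lip_norm_le:
  fixes f :: "'a::metric_space \<Rightarrow> real"
  assumes "C-lipschitz_on UNIV f" and "(a::'a) \<noteq> b"
  shows "lip_norm f \<le> C"
  unfolding lip_norm_def
  using assms lipschitz_quotient_le[OF assms(1)] by (intro cSup_least) auto

lemma lipschitz_quotient_le_lip_norm:
  fixes f :: "'a::metric_space \<Rightarrow> real"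
  assumes "C-lipschitz_on UNIV f" and "x \<noteq> y"
  shows "\<bar>f x - f y\<bar> / dist x y \<le> lip_norm f"
  unfolding lip_norm_def
  using assms lipschitz_quotient_le[OF assms(1)] by (intro cSup_upper bdd_aboveI) auto

lemma lipschitz_on_lip_norm:
  fixes f :: "'a::metric_space \<Rightarrow> real"
  assumes "C-lipschitz_on UNIV f" and "(a::'a) \<noteq> b"
  shows "(lip_norm f)-lipschitz_on UNIV f"
proof (rule lipschitz_onI)
  fix x y :: 'a
  show "dist (f x) (f y) \<le> lip_norm f * dist x y"
  proof (cases "x = y")
    case True
    then show ?thesis by simp
  next
    case False
    then show ?thesis
      using lipschitz_quotient_le_lip_norm[OF assms(1) False]
      by (simp add: dist_real_def pos_divide_le_eq)
  qed
  have "0 \<le> \<bar>f a - f b\<bar> / dist a b"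
    by simp
  then show "0 \<le> lip_norm f"
    using lipschitz_quotient_le_lip_norm[OF assms] by linarith
qed

lemma abs_molecule_le_lip_norm:
  assumes "f \<in> Lip0 z" and "x \<noteq> y"
  shows "\<bar>molecule x y f\<bar> \<le> lip_norm f"
  using assms lipschitz_quotient_le_lip_norm[of _ f x y]
  by (auto simp: Lip0_def molecule_def)

lemma molecule_diff: "molecule x y (\<lambda>v. f v - g v) = molecule x y f - molecule x y g"
  by (simp add: molecule_def diff_divide_distrib)

lemma molecule_cmult: "molecule x y (\<lambda>v. a * f v) = a * molecule x y f"
  by (simp add: molecule_def right_diff_distrib[symmetric])

lemma Lip0_diff: "f \<in> Lip0 z \<Longrightarrow> g \<in> Lip0 z \<Longrightarrow> (\<lambda>v. f v - g v) \<in> Lip0 z"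
  unfolding Lip0_def by (auto intro: lipschitz_on_diff)

lemma Lip0_cmult: "f \<in> Lip0 z \<Longrightarrow> (\<lambda>v. a * f v) \<in> Lip0 z"
  unfolding Lip0_def by (auto intro: lipschitz_on_cmult_real)

lemma abs_le_dual_norm:
  assumes "\<And>h. h \<in> Lip0 z \<Longrightarrow> lip_norm h \<le> 1 \<Longrightarrow> \<bar>\<phi> h\<bar> \<le> B"
    and "f \<in> Lip0 z" and "lip_norm f \<le> 1"
  shows "\<bar>\<phi> f\<bar> \<le> dual_norm z \<phi>"
  unfolding dual_norm_def using assms by (intro cSup_upper bdd_aboveI) auto

lemma Lip0_suminf:
  fixes g :: "nat \<Rightarrow> 'a::metric_space \<Rightarrow> real"
  assumes Lip0: "\<And>k. g k \<in> Lip0 z"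
    and lip: "\<And>k. (L k)-lipschitz_on UNIV (g k)" and "summable L"
  shows "(\<lambda>v. \<Sum>k. g k v) \<in> Lip0 z"
    and "(\<Sum>k. L k)-lipschitz_on UNIV (\<lambda>v. \<Sum>k. g k v)"
    and "(\<lambda>k. molecule x y (g k)) sums molecule x y (\<lambda>v. \<Sum>k. g k v)"
proof -
  have diff_le: "\<bar>g k v - g k w\<bar> \<le> L k * dist v w" for k v w
    using lipschitz_onD[OF lip] by (simp add: dist_real_def)
  have summable_diff: "summable (\<lambda>k. \<bar>g k v - g k w\<bar>)" for v w
    using diff_le by (intro summable_comparison_test'[OF summable_mult2[OF \<open>summable L\<close>]]) auto
  have summable: "summable (\<lambda>k. g k v)" for v
    using summable_diff[of v z] Lip0 by (simp add: Lip0_def summable_rabs_cancel)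
  show lipschitz: "(\<Sum>k. L k)-lipschitz_on UNIV (\<lambda>v. \<Sum>k. g k v)"
  proof (rule lipschitz_onI)
    fix v w :: 'a
    have "dist (\<Sum>k. g k v) (\<Sum>k. g k w) = \<bar>\<Sum>k. g k v - g k w\<bar>"
      by (simp add: dist_real_def suminf_diff[OF summable summable])
    also have "\<dots> \<le> (\<Sum>k. \<bar>g k v - g k w\<bar>)"
      by (rule summable_rabs[OF summable_diff])
    also have "\<dots> \<le> (\<Sum>k. L k * dist v w)"
      by (rule suminf_le[OF diff_le summable_diff summable_mult2[OF \<open>summable L\<close>]])
    also have "\<dots> = (\<Sum>k. L k) * dist v w"
      by (rule suminf_mult2[OF \<open>summable L\<close>, symmetric])
    finally show "dist (\<Sum>k. g k v) (\<Sum>k. g k w) \<le> (\<Sum>k. L k) * dist v w" .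
    show "0 \<le> (\<Sum>k. L k)"
      using lipschitz_on_nonneg[OF lip] by (intro suminf_nonneg[OF \<open>summable L\<close>])
  qed
  show "(\<lambda>v. \<Sum>k. g k v) \<in> Lip0 z"
    using Lip0 lipschitz by (auto simp: Lip0_def)
  show "(\<lambda>k. molecule x y (g k)) sums molecule x y (\<lambda>v. \<Sum>k. g k v)"
    unfolding molecule_def by (intro sums_divide sums_diff summable_sums summable)
qed

lemma exists_limit_tail_bounded:
  fixes u r :: "nat \<Rightarrow> real"
  assumes tail: "\<And>k m. k \<le> m \<Longrightarrow> \<bar>u m - u k\<bar> \<le> r k" and "r \<longlonglongrightarrow> 0"
  shows "\<exists>l. \<forall>k. \<bar>l - u k\<bar> \<le> r k"
proof -
  have "Cauchy u"
  proof (rule CauchyI)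
    fix e :: real assume "0 < e"
    then obtain M where "\<forall>n\<ge>M. norm (r n - 0) < e / 2"
      using LIMSEQ_D[OF \<open>r \<longlonglongrightarrow> 0\<close>, of "e / 2"] by auto
    then have M: "r M < e / 2" by auto
    have "\<bar>u m - u n\<bar> < e" if "M \<le> m" "M \<le> n" for m n
      using tail[OF that(1)] tail[OF that(2)] M by linarith
    then show "\<exists>M. \<forall>m\<ge>M. \<forall>n\<ge>M. norm (u m - u n) < e" by auto
  qed
  then have "u \<longlonglongrightarrow> lim u"
    by (simp add: Cauchy_convergent_iff convergent_LIMSEQ_iff)
  then have "(\<lambda>m. \<bar>u m - u k\<bar>) \<longlonglongrightarrow> \<bar>lim u - u k\<bar>" for k
    by (intro tendsto_intros)
  then have "\<bar>lim u - u k\<bar> \<le> r k" for k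
    using tail by (intro Lim_bounded[of "\<lambda>m. \<bar>u m - u k\<bar>" _ k]) auto
  then show ?thesis by blast
qed

text \<open>Closed balls of \<open>\<ell>\<^sub>\<infinity>(I)\<close>; coordinates outside \<open>I\<close> are ignored.\<close>

definition sup_cball :: "'i set \<Rightarrow> ('i \<Rightarrow> real) \<Rightarrow> real \<Rightarrow> ('i \<Rightarrow> real) set" where
  "sup_cball I \<beta> r = {\<alpha>. \<forall>i\<in>I. \<bar>\<alpha> i - \<beta> i\<bar> \<le> r}"

lemma sup_cball_subset:
  assumes "\<forall>i\<in>I. \<bar>\<beta>' i - \<beta> i\<bar> + r' \<le> r"
  shows "sup_cball I \<beta>' r' \<subseteq> sup_cball I \<beta> r"
proof
  fix \<alpha> assume "\<alpha> \<in> sup_cball I \<beta>' r'"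
  then have "\<bar>\<alpha> i - \<beta> i\<bar> \<le> r" if "i \<in> I" for i
    using assms that by (fastforce simp: sup_cball_def)
  then show "\<alpha> \<in> sup_cball I \<beta> r"
    by (simp add: sup_cball_def)
qed

lemma nested_sup_cballs_common_point:
  assumes nested: "\<And>k. sup_cball I (b (Suc k)) (r (Suc k)) \<subseteq> sup_cball I (b k) (r k)"
    and "\<And>k. 0 \<le> r k" and "r \<longlonglongrightarrow> 0"
  shows "\<exists>\<delta>. \<forall>k. \<delta> \<in> sup_cball I (b k) (r k)"
proof -
  have "b m \<in> sup_cball I (b k) (r k)" if "k \<le> m" for k m
  proof -
    have "b m \<in> sup_cball I (b m) (r m)"
      using \<open>0 \<le> r m\<close> by (simp add: sup_cball_def)
    then show ?thesis
      using lift_Suc_antimono_le[of "\<lambda>k. sup_cball I (b k) (r k)", OF nested that] by blast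
  qed
  then have "\<exists>l. \<forall>k. \<bar>l - b k i\<bar> \<le> r k" if "i \<in> I" for i
    using that \<open>r \<longlonglongrightarrow> 0\<close> by (intro exists_limit_tail_bounded) (auto simp: sup_cball_def)
  then obtain \<delta> where "\<forall>i\<in>I. \<forall>k. \<bar>\<delta> i - b k i\<bar> \<le> r k"
    using bchoice[of I "\<lambda>i l. \<forall>k. \<bar>l - b k i\<bar> \<le> r k"] by blast
  then show ?thesis
    by (auto simp: sup_cball_def)
qed

lemma sup_cball_Baire:
  fixes P :: "nat \<Rightarrow> ('i \<Rightarrow> real) set"
  assumes shrink: "\<And>n \<beta> r. 0 < r \<Longrightarrow> \<exists>\<beta>' r'. 0 < r' \<and> r' \<le> r / 2 \<and>
      sup_cball I \<beta>' r' \<subseteq> sup_cball I \<beta> r \<and> sup_cball I \<beta>' r' \<inter> P n = {}"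
    and "0 < r\<^sub>0"
  shows "\<exists>\<delta>\<in>sup_cball I \<beta>\<^sub>0 r\<^sub>0. \<forall>n. \<delta> \<notin> P n"
proof -
  define avoiding_subball where "avoiding_subball n \<beta> r p \<longleftrightarrow>
      0 < snd p \<and> snd p \<le> r / 2 \<and> sup_cball I (fst p) (snd p) \<subseteq> sup_cball I \<beta> r \<and>
      sup_cball I (fst p) (snd p) \<inter> P n = {}" for n \<beta> r p
  have exists_avoiding_subball: "\<exists>p. avoiding_subball n \<beta> r p" if "0 < r" for n \<beta> r
    using shrink[where n = n and \<beta> = \<beta>, OF that] unfolding avoiding_subball_def by auto
  define balls where "balls = rec_nat (\<beta>\<^sub>0, r\<^sub>0) (\<lambda>n (\<beta>, r). SOME p. avoiding_subball n \<beta> r p)"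
  define b where "b k = fst (balls k)" for k
  define r where "r k = snd (balls k)" for k
  have b_0: "b 0 = \<beta>\<^sub>0" and r_0: "r 0 = r\<^sub>0"
    by (simp_all add: b_def r_def balls_def)
  have step: "avoiding_subball k (b k) (r k) (b (Suc k), r (Suc k))" if "0 < r k" for k
    using someI_ex[OF exists_avoiding_subball[OF that]] by (simp add: b_def r_def balls_def split_beta)
  have r_pos: "0 < r k" for k
    by (induction k) (use step \<open>0 < r\<^sub>0\<close> in \<open>auto simp: r_0 avoiding_subball_def\<close>)
  have r_half: "r (Suc k) \<le> r k / 2"
    and nested: "sup_cball I (b (Suc k)) (r (Suc k)) \<subseteq> sup_cball I (b k) (r k)"
    and avoids: "sup_cball I (b (Suc k)) (r (Suc k)) \<inter> P k = {}" for k
    using step[OF r_pos[of k]] by (simp_all add: avoiding_subball_def)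
  have r_le: "r k \<le> r\<^sub>0 * (1/2) ^ k" for k
  proof (induction k)
    case (Suc k)
    then show ?case
      using r_half[of k] by simp
  qed (simp add: r_0)
  have "r \<longlonglongrightarrow> 0"
  proof (rule Lim_null_comparison[OF always_eventually])
    show "\<forall>k. norm (r k) \<le> r\<^sub>0 * (1/2) ^ k"
      using r_pos r_le by (simp add: abs_of_pos)
    show "(\<lambda>k. r\<^sub>0 * (1/2::real) ^ k) \<longlonglongrightarrow> 0"
      by (intro tendsto_mult_right_zero LIMSEQ_power_zero) simp
  qed
  then obtain \<delta> where "\<And>k. \<delta> \<in> sup_cball I (b k) (r k)"
    using nested_sup_cballs_common_point[of I b r, OF nested] r_pos by (force intro: less_imp_le)
  then show ?thesis
    using avoids by (metis b_0 r_0 disjoint_iff)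
qed

context
  fixes z :: "'a::metric_space" and I :: "'i set" and xs ys :: "'i \<Rightarrow> 'a"
begin

text \<open>\<open>\<alpha>\<close> lies in the \<open>\<ell>\<^sub>\<infinity>(I)\<close>-closure of the image under \<open>T\<close> of the
  \<open>C\<close>-Lipschitz functions in \<open>Lip\<^sub>0(X)\<close>.\<close>

definition near_interpolable :: "real \<Rightarrow> ('i \<Rightarrow> real) \<Rightarrow> bool" where
  "near_interpolable C \<alpha> \<longleftrightarrow> (\<forall>\<epsilon>>0. \<exists>f\<in>Lip0 z. C-lipschitz_on UNIV f \<and>
     (\<forall>i\<in>I. \<bar>\<alpha> i - molecule (xs i) (ys i) f\<bar> \<le> \<epsilon>))"

lemma near_interpolableI:
  assumes "f \<in> Lip0 z" and "C-lipschitz_on UNIV f" and "\<forall>i\<in>I. molecule (xs i) (ys i) f = \<alpha> i"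
  shows "near_interpolable C \<alpha>"
  using assms by (auto simp: near_interpolable_def)

lemma near_interpolable_diff:
  assumes "near_interpolable C \<alpha>" and "near_interpolable D \<beta>"
  shows "near_interpolable (C + D) (\<lambda>i. \<alpha> i - \<beta> i)"
  unfolding near_interpolable_def
proof (intro allI impI)
  fix \<epsilon> :: real assume "0 < \<epsilon>"
  then obtain f g where f: "f \<in> Lip0 z" "C-lipschitz_on UNIV f"
      "\<forall>i\<in>I. \<bar>\<alpha> i - molecule (xs i) (ys i) f\<bar> \<le> \<epsilon> / 2"
    and g: "g \<in> Lip0 z" "D-lipschitz_on UNIV g"
      "\<forall>i\<in>I. \<bar>\<beta> i - molecule (xs i) (ys i) g\<bar> \<le> \<epsilon> / 2"
    using assms unfolding near_interpolable_def by (meson half_gt_zero)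
  have "\<bar>\<alpha> i - \<beta> i - molecule (xs i) (ys i) (\<lambda>v. f v - g v)\<bar> \<le> \<epsilon>" if "i \<in> I" for i
    using f(3)[rule_format, OF that] g(3)[rule_format, OF that]
    unfolding molecule_diff by arith
  then show "\<exists>h\<in>Lip0 z. (C + D)-lipschitz_on UNIV h \<and>
      (\<forall>i\<in>I. \<bar>\<alpha> i - \<beta> i - molecule (xs i) (ys i) h\<bar> \<le> \<epsilon>)"
    using f g by (blast intro: Lip0_diff lipschitz_on_diff)
qed

lemma near_interpolable_cmult:
  assumes "near_interpolable C \<alpha>" and "0 < a"
  shows "near_interpolable (a * C) (\<lambda>i. a * \<alpha> i)"
  unfolding near_interpolable_def
proof (intro allI impI)
  fix \<epsilon> :: real assume "0 < \<epsilon>"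
  then obtain f where f: "f \<in> Lip0 z" "C-lipschitz_on UNIV f"
      "\<forall>i\<in>I. \<bar>\<alpha> i - molecule (xs i) (ys i) f\<bar> \<le> \<epsilon> / a"
    using assms unfolding near_interpolable_def by (meson divide_pos_pos)
  have "\<bar>a * \<alpha> i - molecule (xs i) (ys i) (\<lambda>v. a * f v)\<bar> \<le> \<epsilon>" if "i \<in> I" for i
  proof -
    have "\<bar>a * \<alpha> i - molecule (xs i) (ys i) (\<lambda>v. a * f v)\<bar> = a * \<bar>\<alpha> i - molecule (xs i) (ys i) f\<bar>"
      using \<open>0 < a\<close> by (simp add: molecule_cmult abs_mult right_diff_distrib[symmetric])
    also have "\<dots> \<le> \<epsilon>"
      using f(3) that \<open>0 < a\<close> by (simp add: pos_le_divide_eq mult.commute)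
    finally show ?thesis .
  qed
  then show "\<exists>h\<in>Lip0 z. (a * C)-lipschitz_on UNIV h \<and>
      (\<forall>i\<in>I. \<bar>a * \<alpha> i - molecule (xs i) (ys i) h\<bar> \<le> \<epsilon>)"
    using f \<open>0 < a\<close> by (blast intro: Lip0_cmult lipschitz_on_cmult_real_nonneg less_imp_le)
qed

lemma not_near_interpolable_sup_cball:
  assumes "\<not> near_interpolable C \<alpha>"
  shows "\<exists>\<epsilon>>0. \<forall>\<alpha>'\<in>sup_cball I \<alpha> \<epsilon>. \<not> near_interpolable C \<alpha>'"
proof -
  obtain \<epsilon> where "0 < \<epsilon>" and far: "\<And>f. f \<in> Lip0 z \<Longrightarrow> C-lipschitz_on UNIV f \<Longrightarrow>
      \<exists>i\<in>I. \<bar>\<alpha> i - molecule (xs i) (ys i) f\<bar> > \<epsilon>"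
    using assms unfolding near_interpolable_def by (auto simp: not_le)
  have "\<not> near_interpolable C \<alpha>'" if "\<alpha>' \<in> sup_cball I \<alpha> (\<epsilon> / 2)" for \<alpha>'
  proof
    assume "near_interpolable C \<alpha>'"
    then obtain f where "f \<in> Lip0 z" "C-lipschitz_on UNIV f"
        and close: "\<forall>i\<in>I. \<bar>\<alpha>' i - molecule (xs i) (ys i) f\<bar> \<le> \<epsilon> / 2"
      using \<open>0 < \<epsilon>\<close> unfolding near_interpolable_def by (meson half_gt_zero)
    with far obtain i where "i \<in> I" "\<bar>\<alpha> i - molecule (xs i) (ys i) f\<bar> > \<epsilon>"
      by blast
    moreover have "\<bar>\<alpha>' i - \<alpha> i\<bar> \<le> \<epsilon> / 2"
      using that \<open>i \<in> I\<close> by (simp add: sup_cball_def)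
    ultimately show False
      using close[rule_format, OF \<open>i \<in> I\<close>] by arith
  qed
  then show ?thesis
    using \<open>0 < \<epsilon>\<close> half_gt_zero by blast
qed

lemma exists_sup_cball_near_interpolable:
  assumes "lip_interpolating z I xs ys"
  shows "\<exists>n::nat. \<exists>\<beta> r. 0 < r \<and> (\<forall>\<alpha>\<in>sup_cball I \<beta> r. near_interpolable (real n) \<alpha>)"
proof (rule ccontr)
  assume no_ball: "\<not> ?thesis"
  have "\<exists>\<beta>' r'. 0 < r' \<and> r' \<le> r / 2 \<and> sup_cball I \<beta>' r' \<subseteq> sup_cball I \<beta> r \<and>
      sup_cball I \<beta>' r' \<inter> {\<alpha>. near_interpolable (real n) \<alpha>} = {}" if "0 < r" for n \<beta> r
  proof -
    obtain \<alpha> where \<alpha>: "\<alpha> \<in> sup_cball I \<beta> (r / 2)" "\<not> near_interpolable (real n) \<alpha>"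
      using no_ball \<open>0 < r\<close> half_gt_zero by blast
    obtain \<epsilon> where "0 < \<epsilon>" and far: "\<forall>\<alpha>'\<in>sup_cball I \<alpha> \<epsilon>. \<not> near_interpolable (real n) \<alpha>'"
      using not_near_interpolable_sup_cball[OF \<alpha>(2)] by blast
    have "sup_cball I \<alpha> (min \<epsilon> (r / 2)) \<subseteq> sup_cball I \<beta> r"
      using \<alpha>(1) min.cobounded2[of \<epsilon> "r / 2"] by (intro sup_cball_subset) (auto simp: sup_cball_def)
    moreover have "sup_cball I \<alpha> (min \<epsilon> (r / 2)) \<subseteq> sup_cball I \<alpha> \<epsilon>"
      by (auto simp: sup_cball_def)
    ultimately show ?thesis
      using \<open>0 < \<epsilon>\<close> \<open>0 < r\<close> far by (intro exI[of _ \<alpha>] exI[of _ "min \<epsilon> (r / 2)"]) auto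
  qed
  then obtain \<delta> where "\<delta> \<in> sup_cball I (\<lambda>_. 0) 1" and not_near: "\<And>n. \<not> near_interpolable (real n) \<delta>"
    using sup_cball_Baire[where P = "\<lambda>n. {\<alpha>. near_interpolable (real n) \<alpha>}" and I = I
        and r\<^sub>0 = 1 and \<beta>\<^sub>0 = "\<lambda>_. 0"] by auto
  then have "bounded (\<delta> ` I)"
    by (auto simp: bounded_iff sup_cball_def)
  then obtain f where "f \<in> Lip0 z" and f: "\<forall>i\<in>I. molecule (xs i) (ys i) f = \<delta> i"
    using assms unfolding lip_interpolating_def by blast
  then obtain C where "C-lipschitz_on UNIV f"
    by (auto simp: Lip0_def)
  then have f_lip: "(real (nat \<lceil>C\<rceil>))-lipschitz_on UNIV f"
    by (rule lipschitz_on_le) linarith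
  have "near_interpolable (real (nat \<lceil>C\<rceil>)) \<delta>"
    using \<open>f \<in> Lip0 z\<close> f_lip f by (rule near_interpolableI)
  with not_near show False
    by blast
qed

lemma sup_cball_near_interpolable:
  assumes "lip_interpolating z I xs ys"
  obtains c where "\<And>\<alpha>. \<alpha> \<in> sup_cball I (\<lambda>_. 0) 1 \<Longrightarrow> near_interpolable c \<alpha>"
proof -
  obtain n :: nat and \<beta> r where "0 < r" and ball: "\<forall>\<alpha>\<in>sup_cball I \<beta> r. near_interpolable (real n) \<alpha>"
    using exists_sup_cball_near_interpolable[OF assms] by blast
  \<comment> \<open>\<open>\<beta> \<plusminus> r\<alpha>\<close> both lie in the ball, and half their difference is \<open>r\<alpha>\<close>.\<close>
  have "near_interpolable (1 / (2 * r) * (real n + real n)) \<alpha>" if "\<alpha> \<in> sup_cball I (\<lambda>_. 0) 1" for \<alpha>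
  proof -
    have "\<bar>r * \<alpha> i\<bar> \<le> r" if "i \<in> I" for i
      using \<open>\<alpha> \<in> sup_cball I (\<lambda>_. 0) 1\<close> \<open>0 < r\<close> that
      by (simp add: sup_cball_def abs_mult mult_le_cancel_left1)
    then have "(\<lambda>i. \<beta> i + r * \<alpha> i) \<in> sup_cball I \<beta> r" "(\<lambda>i. \<beta> i - r * \<alpha> i) \<in> sup_cball I \<beta> r"
      by (simp_all add: sup_cball_def)
    then have "near_interpolable (real n + real n) (\<lambda>i. (\<beta> i + r * \<alpha> i) - (\<beta> i - r * \<alpha> i))"
      using ball by (intro near_interpolable_diff) auto
    from near_interpolable_cmult[OF this, of "1 / (2 * r)"]
    show ?thesis
      using \<open>0 < r\<close> by simp
  qed
  then show thesis
    by (rule that)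
qed

lemma near_interpolable_sup_cball_scaled:
  assumes near: "\<And>\<alpha>. \<alpha> \<in> sup_cball I (\<lambda>_. 0) 1 \<Longrightarrow> near_interpolable c \<alpha>"
    and "0 < t" and "\<rho> \<in> sup_cball I (\<lambda>_. 0) t"
  shows "near_interpolable (c * t) \<rho>"
proof -
  have "(\<lambda>i. \<rho> i / t) \<in> sup_cball I (\<lambda>_. 0) 1"
    using assms(2,3) by (simp add: sup_cball_def)
  from near_interpolable_cmult[OF near[OF this] \<open>0 < t\<close>] show ?thesis
    using \<open>0 < t\<close> by (simp add: mult.commute)
qed

lemma interpolable_by_successive_approximation:
  assumes near: "\<And>\<alpha>. \<alpha> \<in> sup_cball I (\<lambda>_. 0) 1 \<Longrightarrow> near_interpolable c \<alpha>"
    and "0 \<le> c" and \<alpha>: "\<alpha> \<in> sup_cball I (\<lambda>_. 0) 1"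
  shows "\<exists>f\<in>Lip0 z. (2 * c)-lipschitz_on UNIV f \<and> (\<forall>i\<in>I. molecule (xs i) (ys i) f = \<alpha> i)"
proof -
  define approx where "approx k \<rho> g \<longleftrightarrow> g \<in> Lip0 z \<and> (c * (1/2) ^ k)-lipschitz_on UNIV g \<and>
      (\<forall>i\<in>I. \<bar>\<rho> i - molecule (xs i) (ys i) g\<bar> \<le> (1/2) ^ Suc k)" for k \<rho> g
  have exists_approx: "\<exists>g. approx k \<rho> g" if "\<rho> \<in> sup_cball I (\<lambda>_. 0) ((1/2) ^ k)" for k \<rho>
    using near_interpolable_sup_cball_scaled[OF near _ that]
    unfolding near_interpolable_def approx_def by (meson zero_less_power half_gt_zero zero_less_one)
  define G where "G k \<rho> = (SOME g. approx k \<rho> g)" for k \<rho>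
  define \<rho> where "\<rho> = rec_nat \<alpha> (\<lambda>k \<rho>\<^sub>k i. \<rho>\<^sub>k i - molecule (xs i) (ys i) (G k \<rho>\<^sub>k))"
  define g where "g k = G k (\<rho> k)" for k
  have \<rho>_0: "\<rho> 0 = \<alpha>" and \<rho>_Suc: "\<rho> (Suc k) i = \<rho> k i - molecule (xs i) (ys i) (g k)" for k i
    by (simp_all add: \<rho>_def g_def)
  have \<rho>_small: "\<rho> k \<in> sup_cball I (\<lambda>_. 0) ((1/2) ^ k)" and g: "approx k (\<rho> k) (g k)" for k
  proof -
    show small: "\<rho> k \<in> sup_cball I (\<lambda>_. 0) ((1/2) ^ k)" for k
    proof (induction k)
      case (Suc k)
      then have "approx k (\<rho> k) (g k)"
        unfolding g_def G_def by (rule someI_ex[OF exists_approx])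
      then show ?case
        by (simp add: approx_def sup_cball_def \<rho>_Suc)
    qed (use \<alpha> in \<open>simp add: \<rho>_0\<close>)
    show "approx k (\<rho> k) (g k)"
      unfolding g_def G_def by (rule someI_ex[OF exists_approx[OF small]])
  qed
  define f where "f v = (\<Sum>k. g k v)" for v
  have "(\<Sum>k. c * (1/2::real) ^ k) = 2 * c"
    by (simp add: suminf_mult suminf_geometric)
  then have "f \<in> Lip0 z" and f_lip: "(2 * c)-lipschitz_on UNIV f"
    and f_sums: "\<And>x y. (\<lambda>k. molecule x y (g k)) sums molecule x y f"
    using Lip0_suminf[of g z "\<lambda>k. c * (1/2) ^ k"] g
    unfolding f_def approx_def by (auto simp: summable_geometric)
  have "molecule (xs i) (ys i) f = \<alpha> i" if "i \<in> I" for i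
  proof -
    have partial_sums: "(\<Sum>k<N. molecule (xs i) (ys i) (g k)) = \<alpha> i - \<rho> N i" for N
      by (induction N) (simp_all add: \<rho>_0 \<rho>_Suc)
    have "(\<lambda>N. \<rho> N i) \<longlonglongrightarrow> 0"
      using \<rho>_small that
      by (intro Lim_null_comparison[OF always_eventually LIMSEQ_power_zero[of "1/2::real"]])
        (simp_all add: sup_cball_def)
    then have "(\<lambda>k. molecule (xs i) (ys i) (g k)) sums \<alpha> i"
      unfolding sums_def partial_sums by (auto intro: tendsto_eq_intros)
    then show ?thesis
      using f_sums sums_unique2 by blast
  qed
  then show ?thesis
    using \<open>f \<in> Lip0 z\<close> f_lip by blast
qed

definition lip_interp_bound :: "real \<Rightarrow> bool" where
  "lip_interp_bound K \<longleftrightarrow> 1 \<le> K \<and> (\<forall>\<alpha>\<in>sup_cball I (\<lambda>_. 0) 1.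
     \<exists>f\<in>Lip0 z. lip_norm f \<le> K \<and> (\<forall>i\<in>I. molecule (xs i) (ys i) f = \<alpha> i))"

lemma lip_interp_const_eq_Inf: "lip_interp_const z I xs ys = Inf {K. lip_interp_bound K}"
  by (simp add: lip_interp_const_def lip_interp_bound_def sup_cball_def)

text \<open>The index \<open>i\<close> only supplies two distinct points, without which \<open>lip_norm\<close>
  is \<open>Sup {}\<close>.\<close>

lemma lip_interpolating_has_interp_bound:
  assumes "lip_interpolating z I xs ys" and "i \<in> I"
  shows "\<exists>K. lip_interp_bound K"
proof -
  obtain c where near: "\<And>\<alpha>. \<alpha> \<in> sup_cball I (\<lambda>_. 0) 1 \<Longrightarrow> near_interpolable c \<alpha>"
    using sup_cball_near_interpolable[OF assms(1)] by blast
  have "near_interpolable c (\<lambda>_. 0)"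
    by (rule near) (simp add: sup_cball_def)
  then obtain f0 :: "'a \<Rightarrow> real" where "c-lipschitz_on UNIV f0"
    unfolding near_interpolable_def by (meson zero_less_one)
  then have "0 \<le> c"
    by (rule lipschitz_on_nonneg)
  have "xs i \<noteq> ys i"
    using assms unfolding lip_interpolating_def by blast
  have "\<exists>f\<in>Lip0 z. lip_norm f \<le> max 1 (2 * c) \<and> (\<forall>k\<in>I. molecule (xs k) (ys k) f = \<alpha> k)"
    if \<alpha>: "\<alpha> \<in> sup_cball I (\<lambda>_. 0) 1" for \<alpha>
  proof -
    obtain f where "f \<in> Lip0 z" and f_lip: "(2 * c)-lipschitz_on UNIV f"
      and "\<forall>k\<in>I. molecule (xs k) (ys k) f = \<alpha> k"
      using interpolable_by_successive_approximation[OF near \<open>0 \<le> c\<close> \<alpha>] by blast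
    moreover have "lip_norm f \<le> 2 * c"
      using f_lip \<open>xs i \<noteq> ys i\<close> by (rule lip_norm_le)
    ultimately show ?thesis
      by force
  qed
  then have "lip_interp_bound (max 1 (2 * c))"
    by (simp add: lip_interp_bound_def)
  then show ?thesis ..
qed

lemma dual_norm_molecule_diff_ge:
  assumes "lip_interp_bound K" and "i \<in> I" "j \<in> I" "i \<noteq> j"
    and "xs i \<noteq> ys i" "xs j \<noteq> ys j"
  shows "2 / K \<le> dual_norm z (\<lambda>f. molecule (xs i) (ys i) f - molecule (xs j) (ys j) f)"
    (is "_ \<le> dual_norm z ?\<phi>")
proof -
  have "1 \<le> K" using assms(1) by (simp add: lip_interp_bound_def)
  define \<alpha> where "\<alpha> k = (if k = i then 1 else if k = j then -1 else 0 :: real)" for k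
  have "\<alpha> \<in> sup_cball I (\<lambda>_. 0) 1"
    by (simp add: sup_cball_def \<alpha>_def)
  then obtain f where "f \<in> Lip0 z" "lip_norm f \<le> K" and f: "\<forall>k\<in>I. molecule (xs k) (ys k) f = \<alpha> k"
    using assms(1) unfolding lip_interp_bound_def by blast
  define g where "g = (\<lambda>v. 1 / K * f v)"
  have "g \<in> Lip0 z"
    unfolding g_def using \<open>f \<in> Lip0 z\<close> by (rule Lip0_cmult)
  obtain C where "C-lipschitz_on UNIV f"
    using \<open>f \<in> Lip0 z\<close> by (auto simp: Lip0_def)
  then have "(1 / K * lip_norm f)-lipschitz_on UNIV g"
    unfolding g_def using \<open>1 \<le> K\<close>
    by (intro lipschitz_on_cmult_real_nonneg lipschitz_on_lip_norm[OF _ assms(5)]) auto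
  then have "lip_norm g \<le> 1 / K * lip_norm f"
    using assms(5) by (rule lip_norm_le)
  also have "\<dots> \<le> 1"
    using \<open>lip_norm f \<le> K\<close> \<open>1 \<le> K\<close> by (simp add: field_simps)
  finally have "lip_norm g \<le> 1" .
  have "\<bar>?\<phi> h\<bar> \<le> 2" if "h \<in> Lip0 z" "lip_norm h \<le> 1" for h
    using abs_molecule_le_lip_norm[OF that(1) assms(5)] abs_molecule_le_lip_norm[OF that(1) assms(6)]
      that(2) by linarith
  then have "\<bar>?\<phi> g\<bar> \<le> dual_norm z ?\<phi>"
    using \<open>g \<in> Lip0 z\<close> \<open>lip_norm g \<le> 1\<close> by (rule abs_le_dual_norm)
  moreover have "?\<phi> g = 1 / K * ?\<phi> f"
    unfolding g_def molecule_cmult by (simp add: right_diff_distrib)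
  moreover have "?\<phi> f = 2"
    using f assms(2-4) by (simp add: \<alpha>_def)
  ultimately show ?thesis
    using \<open>1 \<le> K\<close> by simp
qed

end

lemma divide_Inf_le:
  fixes S :: "real set"
  assumes "S \<noteq> {}" and "\<And>K. K \<in> S \<Longrightarrow> 1 \<le> K" and "\<And>K. K \<in> S \<Longrightarrow> 1 / K \<le> d"
  shows "1 / Inf S \<le> d"
proof -
  have "0 < d"
    using assms by (meson ex_in_conv less_le_trans zero_less_divide_1_iff zero_less_one)
  have "1 / d \<le> K" if "K \<in> S" for K
  proof -
    have "0 < K"
      using assms(2)[OF that] by simp
    then show ?thesis
      using assms(3)[OF that] \<open>0 < d\<close> by (simp add: divide_le_eq le_divide_eq mult.commute)
  qed
  then have "1 / d \<le> Inf S"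
    using assms(1) by (intro cInf_greatest)
  moreover have "0 < Inf S"
    using \<open>0 < d\<close> \<open>1 / d \<le> Inf S\<close> by (metis less_le_trans zero_less_divide_1_iff)
  ultimately show ?thesis
    using \<open>0 < d\<close> by (simp add: divide_le_eq le_divide_eq mult.commute)
qed

theorem proposition3p20:
  fixes z :: "'a::metric_space" and I :: "'i set" and xs ys :: "'i \<Rightarrow> 'a"
  assumes "lip_interpolating z I xs ys"
    and "i \<in> I" and "j \<in> I" and "i \<noteq> j"
  shows "dual_norm z (\<lambda>f. molecule (xs i) (ys i) f - molecule (xs j) (ys j) f)
           \<ge> 1 / lip_interp_const z I xs ys"
proof -
  have "xs i \<noteq> ys i" and "xs j \<noteq> ys j"
    using assms unfolding lip_interpolating_def by auto
  have "1 / K \<le> dual_norm z (\<lambda>f. molecule (xs i) (ys i) f - molecule (xs j) (ys j) f)"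
    if K: "lip_interp_bound z I xs ys K" for K
  proof -
    have "1 / K \<le> 2 / K"
      using K by (simp add: lip_interp_bound_def divide_right_mono)
    also have "\<dots> \<le> dual_norm z (\<lambda>f. molecule (xs i) (ys i) f - molecule (xs j) (ys j) f)"
      using K assms(2-4) \<open>xs i \<noteq> ys i\<close> \<open>xs j \<noteq> ys j\<close> by (rule dual_norm_molecule_diff_ge)
    finally show ?thesis .
  qed
  moreover have "{K. lip_interp_bound z I xs ys K} \<noteq> {}"
    using lip_interpolating_has_interp_bound[OF assms(1,2)] by blast
  ultimately show ?thesis
    unfolding lip_interp_const_eq_Inf
    by (intro divide_Inf_le) (auto simp: lip_interp_bound_def)
qed

end
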